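(* Let $G$ be a vertex-color-avoiding connected graph on $n$ vertices whose vertices are colored with exactly $k\in\mathbb{Z}_+$ colors. Then $|E(G)|\ge n-1$ if $k\le 2$, and $|E(G)|\ge n$ if $k\ge 3$; moreover these lower bounds are sharp (attained by suitable such graphs).
   Context: Vertex-colorings are arbitrary (not necessarily proper). Two vertices $u,v$ of a vertex-colored graph are vertex-$c$-avoiding connected (for a color $c$) if there is a $u$-$v$ path and either at least one of $u,v$ has color $c$ or some $u$-$v$ path contains no vertex of color $c$. The graph is vertex-color-avoiding connected if any two vertices are vertex-$c$-avoiding connected for every color $c$. *)

theory Defs
  imports Main
begin

definition simple_graph :: "'a set \<Rightarrow> 'a set set \<Rightarrow> bool" where
  "simple_graph V E \<longleftrightarrow> finite V \<and>
     (\<forall>e\<in>E. \<exists>u v. e = {u, v} \<and> u \<noteq> v \<and> u \<in> V \<and> v \<in> V)"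

definition conn_in :: "'a set set \<Rightarrow> 'a set \<Rightarrow> 'a \<Rightarrow> 'a \<Rightarrow> bool" where
  "conn_in E S u v \<longleftrightarrow> u \<in> S \<and> v \<in> S \<and>
     (u, v) \<in> {(x, y). {x, y} \<in> E \<and> x \<in> S \<and> y \<in> S}\<^sup>*"

definition vc_avoiding_connected ::
  "'a set \<Rightarrow> 'a set set \<Rightarrow> ('a \<Rightarrow> 'c) \<Rightarrow> 'c \<Rightarrow> 'a \<Rightarrow> 'a \<Rightarrow> bool" where
  "vc_avoiding_connected V E col c u v \<longleftrightarrow> conn_in E V u v \<and>
     (col u = c \<or> col v = c \<or> conn_in E {x \<in> V. col x \<noteq> c} u v)"

definition vertex_color_avoiding_connected ::
  "'a set \<Rightarrow> 'a set set \<Rightarrow> ('a \<Rightarrow> 'c) \<Rightarrow> bool" where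
  "vertex_color_avoiding_connected V E col \<longleftrightarrow>
     (\<forall>c. \<forall>u\<in>V. \<forall>v\<in>V. vc_avoiding_connected V E col c u v)"

end

theory Submission
  imports Defs
begin

text \<open>
A vertex-color-avoiding connected graph is connected, hence has at least \<open>n - 1\<close> edges. If it
has fewer than \<open>n\<close> edges it has a leaf \<open>l\<close> whose only neighbour is \<open>w\<close>. Every path from \<open>l\<close>
starts with the edge to \<open>w\<close>, so unless \<open>l\<close> has the color of \<open>w\<close>, all other vertices must have that
color and only two colors occur; otherwise deleting \<open>l\<close> loses no color, and induction applies.
The bounds are attained by a path colored \<open>0, 1, 1, \<dots>, 1\<close> (for \<open>k \<le> 2\<close>) and by a cycle colored
\<open>0, 1, \<dots>, k - 2, k - 1, \<dots>, k - 1\<close>: removing a singleton color class from the cycle leaves a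
path, and removing the last class leaves an initial segment.
\<close>

section \<open>Connectivity inside a vertex set\<close>

lemma rtrancl_map:
  assumes "\<And>x y. (x, y) \<in> R \<Longrightarrow> (f x, f y) \<in> S\<^sup>*" and "(x, y) \<in> R\<^sup>*"
  shows "(f x, f y) \<in> S\<^sup>*"
  using assms(2) by induction (auto intro: rtrancl_trans assms(1))

lemma conn_in_refl: "u \<in> S \<Longrightarrow> conn_in E S u u"
  unfolding conn_in_def by simp

lemma conn_in_edge: "{u, v} \<in> E \<Longrightarrow> u \<in> S \<Longrightarrow> v \<in> S \<Longrightarrow> conn_in E S u v"
  unfolding conn_in_def by auto

lemma conn_in_trans: "conn_in E S u v \<Longrightarrow> conn_in E S v w \<Longrightarrow> conn_in E S u w"
  unfolding conn_in_def by (meson rtrancl_trans)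

lemma conn_in_sym:
  assumes "conn_in E S u v"
  shows "conn_in E S v u"
proof -
  let ?R = "{(x, y). {x, y} \<in> E \<and> x \<in> S \<and> y \<in> S}"
  have "(u, v) \<in> ?R\<^sup>*" using assms unfolding conn_in_def by blast
  then have "(v, u) \<in> (?R\<inverse>)\<^sup>*" by (rule rtrancl_converseI)
  moreover have "?R\<inverse> = ?R" by (auto simp: insert_commute)
  ultimately show ?thesis using assms unfolding conn_in_def by simp
qed

lemma conn_in_mono:
  assumes "conn_in E S u v" "E \<subseteq> E'" "S \<subseteq> S'"
  shows "conn_in E' S' u v"
proof -
  have "{(x, y). {x, y} \<in> E \<and> x \<in> S \<and> y \<in> S} \<subseteq> {(x, y). {x, y} \<in> E' \<and> x \<in> S' \<and> y \<in> S'}"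
    using assms(2,3) by auto
  from rtrancl_mono[OF this] assms(1,3) show ?thesis
    unfolding conn_in_def by blast
qed

lemma conn_in_first_edge:
  assumes "conn_in E S u v" "u \<noteq> v"
  shows "\<exists>z\<in>S. {u, z} \<in> E"
proof -
  have "(u, v) \<in> {(x, y). {x, y} \<in> E \<and> x \<in> S \<and> y \<in> S}\<^sup>*"
    using assms(1) unfolding conn_in_def by blast
  then show ?thesis using assms(2) by (cases rule: converse_rtranclE) blast+
qed

definition connected_in :: "'a set set \<Rightarrow> 'a set \<Rightarrow> bool" where
  "connected_in E S \<longleftrightarrow> (\<forall>u\<in>S. \<forall>v\<in>S. conn_in E S u v)"

lemma connected_in_mono_edges: "connected_in E S \<Longrightarrow> E \<subseteq> E' \<Longrightarrow> connected_in E' S"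
  unfolding connected_in_def by (blast intro: conn_in_mono)

lemma connected_in_Un_edge:
  assumes A: "connected_in E A" and B: "connected_in E B"
    and ab: "a \<in> A" "b \<in> B" "{a, b} \<in> E"
  shows "connected_in E (A \<union> B)"
proof -
  have within: "conn_in E (A \<union> B) x y" if "x \<in> A \<and> y \<in> A \<or> x \<in> B \<and> y \<in> B" for x y
    using that A B unfolding connected_in_def by (blast intro: conn_in_mono)
  have across: "conn_in E (A \<union> B) x y" if "x \<in> A" "y \<in> B" for x y
    using within[of x a] within[of b y] conn_in_edge[OF ab(3)] that ab(1,2)
    by (blast intro: conn_in_trans)
  show ?thesis
    unfolding connected_in_def using within across by (blast intro: conn_in_sym)
qed

section \<open>Leaves of sparse connected graphs\<close>

lemma simple_graph_edgeD:
  assumes "simple_graph V E" "{u, v} \<in> E"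
  shows "u \<noteq> v" "u \<in> V" "v \<in> V"
proof -
  obtain a b where "{u, v} = {a, b}" "a \<noteq> b" "a \<in> V" "b \<in> V"
    using assms unfolding simple_graph_def by blast
  then show "u \<noteq> v" "u \<in> V" "v \<in> V"
    by (auto simp: doubleton_eq_iff)
qed

lemma simple_graph_finite:
  assumes "simple_graph V E"
  shows "finite V" "finite E"
proof -
  show "finite V" using assms unfolding simple_graph_def by blast
  moreover have "E \<subseteq> Pow V" using assms unfolding simple_graph_def by auto
  ultimately show "finite E" by (meson finite_Pow_iff finite_subset)
qed

lemma sum_degree_eq_twice_card_edges:
  assumes "simple_graph V E"
  shows "(\<Sum>v\<in>V. card {e\<in>E. v \<in> e}) = 2 * card E"
proof -
  have fin: "finite V" "finite E" using simple_graph_finite[OF assms] by auto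
  have "(\<Sum>v\<in>V. card {e\<in>E. v \<in> e}) = (\<Sum>v\<in>V. \<Sum>e\<in>E. if v \<in> e then 1 else 0)"
    using fin by (simp add: sum.If_cases Int_def)
  also have "\<dots> = (\<Sum>e\<in>E. \<Sum>v\<in>V. if v \<in> e then 1 else 0)"
    by (rule sum.swap)
  also have "\<dots> = (\<Sum>e\<in>E. 2)"
  proof (rule sum.cong)
    fix e assume "e \<in> E"
    then obtain a b where ab: "e = {a, b}" "a \<noteq> b" "a \<in> V" "b \<in> V"
      using assms unfolding simple_graph_def by blast
    then have "V \<inter> e = {a, b}" by auto
    then show "(\<Sum>v\<in>V. if v \<in> e then 1 else 0) = (2::nat)"
      using fin ab(2) by (simp add: sum.If_cases)
  qed simp
  finally show ?thesis by simp
qed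

definition is_leaf :: "'a set set \<Rightarrow> 'a \<Rightarrow> 'a \<Rightarrow> bool" where
  "is_leaf E l w \<longleftrightarrow> {l, w} \<in> E \<and> l \<noteq> w \<and> (\<forall>e\<in>E. l \<in> e \<longrightarrow> e = {l, w})"

lemma is_leaf_neighbour:
  assumes "is_leaf E l w" "{l, z} \<in> E"
  shows "z = w"
  using assms unfolding is_leaf_def by (metis doubleton_eq_iff insertI1)

lemma exists_leaf:
  assumes sg: "simple_graph V E" and conn: "connected_in E V"
    and two: "2 \<le> card V" and sparse: "card E < card V"
  shows "\<exists>l\<in>V. \<exists>w. is_leaf E l w"
proof -
  have "\<exists>l\<in>V. card {e\<in>E. l \<in> e} < 2"
  proof (rule ccontr)
    assume "\<not> ?thesis"
    then have "(\<Sum>v\<in>V. 2) \<le> (\<Sum>v\<in>V. card {e\<in>E. v \<in> e})"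
      by (intro sum_mono) (simp add: not_less)
    with sum_degree_eq_twice_card_edges[OF sg] sparse show False by simp
  qed
  then obtain l where l: "l \<in> V" "card {e\<in>E. l \<in> e} \<le> 1" by auto
  have "\<exists>u\<in>V. u \<noteq> l"
  proof (rule ccontr)
    assume "\<not> ?thesis"
    then have "card V \<le> card {l}"
      by (intro card_mono) auto
    with two show False by simp
  qed
  then obtain u where u: "u \<in> V" "l \<noteq> u" by blast
  with conn l(1) have "conn_in E V l u" unfolding connected_in_def by blast
  from conn_in_first_edge[OF this u(2)] obtain w where w: "{l, w} \<in> E" by blast
  have "finite {e\<in>E. l \<in> e}" using simple_graph_finite(2)[OF sg] by simp
  from card_le_Suc0_iff_eq[OF this] l(2)
  have all_eq: "\<forall>x\<in>{e\<in>E. l \<in> e}. \<forall>y\<in>{e\<in>E. l \<in> e}. x = y" by simp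
  have "e = {l, w}" if "e \<in> E" "l \<in> e" for e
    using all_eq[rule_format, of e "{l, w}"] that w by simp
  then have "is_leaf E l w"
    unfolding is_leaf_def using w simple_graph_edgeD(1)[OF sg w] by blast
  with l(1) show ?thesis by blast
qed

lemma conn_in_remove_leaf:
  assumes lw: "is_leaf E l w" and c: "conn_in E S u v" and "u \<noteq> l" "v \<noteq> l"
  shows "conn_in (E - {{l, w}}) (S - {l}) u v"
proof -
  let ?R = "{(x, y). {x, y} \<in> E \<and> x \<in> S \<and> y \<in> S}"
  let ?R' = "{(x, y). {x, y} \<in> E - {{l, w}} \<and> x \<in> S - {l} \<and> y \<in> S - {l}}"
  \<comment> \<open>retracting \<open>l\<close> onto its only neighbour maps walks in \<open>S\<close> to walks in \<open>S - {l}\<close>\<close>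
  define r where "r x = (if x = l then w else x)" for x
  have at_l: "e = {l, w}" if "e \<in> E" "l \<in> e" for e
    using lw that unfolding is_leaf_def by blast
  have "(r x, r y) \<in> ?R'\<^sup>*" if xy: "(x, y) \<in> ?R" for x y
  proof (cases "l \<in> {x, y}")
    case True
    have "{x, y} = {l, w}" using at_l[OF _ True] xy by simp
    then have "x \<in> {l, w}" "y \<in> {l, w}" by auto
    then have "r x = r y" unfolding r_def by auto
    then show ?thesis by simp
  next
    case False
    then have "r x = x" "r y = y" "{x, y} \<noteq> {l, w}" unfolding r_def by auto
    with xy False have "(r x, r y) \<in> ?R'" by auto
    then show ?thesis by (rule r_into_rtrancl)
  qed
  moreover have "(u, v) \<in> ?R\<^sup>*" using c unfolding conn_in_def by blast
  ultimately have "(r u, r v) \<in> ?R'\<^sup>*" by (rule rtrancl_map)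
  with c assms(3,4) show ?thesis
    unfolding conn_in_def r_def by simp
qed

lemma connected_in_remove_leaf:
  assumes "connected_in E V" "is_leaf E l w"
  shows "connected_in (E - {{l, w}}) (V - {l})"
  unfolding connected_in_def
proof (intro ballI)
  fix u v assume "u \<in> V - {l}" "v \<in> V - {l}"
  with assms show "conn_in (E - {{l, w}}) (V - {l}) u v"
    unfolding connected_in_def using conn_in_remove_leaf[OF assms(2)] by blast
qed

lemma simple_graph_remove_leaf:
  assumes sg: "simple_graph V E" and lw: "is_leaf E l w"
  shows "simple_graph (V - {l}) (E - {{l, w}})"
  unfolding simple_graph_def
proof (intro conjI ballI)
  show "finite (V - {l})" using simple_graph_finite(1)[OF sg] by simp
  fix e assume e: "e \<in> E - {{l, w}}"
  then obtain a b where ab: "e = {a, b}" "a \<noteq> b" "a \<in> V" "b \<in> V"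
    using sg unfolding simple_graph_def by blast
  have "l \<notin> e" using e lw unfolding is_leaf_def by blast
  with ab show "\<exists>u v. e = {u, v} \<and> u \<noteq> v \<and> u \<in> V - {l} \<and> v \<in> V - {l}"
    by blast
qed

lemma sparse_connected_induct[consumes 3, case_names small remove_leaf]:
  assumes "simple_graph V E" "connected_in E V" "card E < card V"
    and small: "\<And>V E. simple_graph V E \<Longrightarrow> card V \<le> 1 \<Longrightarrow> P V E"
    and remove_leaf: "\<And>V E l w. simple_graph V E \<Longrightarrow> connected_in E V \<Longrightarrow> l \<in> V \<Longrightarrow>
      is_leaf E l w \<Longrightarrow> card V = Suc (card (V - {l})) \<Longrightarrow>
      card E = Suc (card (E - {{l, w}})) \<Longrightarrow> P (V - {l}) (E - {{l, w}}) \<Longrightarrow> P V E"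
  shows "P V E"
  using assms(1-3)
proof (induction "card V" arbitrary: V E)
  case 0
  then show ?case using small by simp
next
  case (Suc m)
  show ?case
  proof (cases "card V \<le> 1")
    case True
    then show ?thesis using small Suc.prems(1) by blast
  next
    case False
    then have "2 \<le> card V" by simp
    then obtain l w where l: "l \<in> V" and lw: "is_leaf E l w"
      using exists_leaf[OF Suc.prems(1,2) _ Suc.prems(3)] by blast
    have "{l, w} \<in> E" using lw unfolding is_leaf_def by blast
    then have cards: "card V = Suc (card (V - {l}))" "card E = Suc (card (E - {{l, w}}))"
      using l simple_graph_finite[OF Suc.prems(1)] by (metis card_Suc_Diff1)+
    have "P (V - {l}) (E - {{l, w}})"
      using Suc cards simple_graph_remove_leaf[OF Suc.prems(1) lw]
        connected_in_remove_leaf[OF Suc.prems(2) lw] by simp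
    then show ?thesis
      using remove_leaf Suc.prems(1,2) l lw cards by blast
  qed
qed

section \<open>Lower bounds\<close>

lemma connected_card_le_Suc_card_edges:
  assumes "simple_graph V E" "connected_in E V"
  shows "card V \<le> Suc (card E)"
proof (cases "card E < card V")
  case True
  with assms show ?thesis
    by (induction rule: sparse_connected_induct) simp_all
qed simp

lemma vertex_color_avoiding_connected_imp_connected_in:
  "vertex_color_avoiding_connected V E col \<Longrightarrow> connected_in E V"
  unfolding vertex_color_avoiding_connected_def vc_avoiding_connected_def connected_in_def
  by blast

lemma vertex_color_avoiding_connected_remove_leaf:
  assumes vca: "vertex_color_avoiding_connected V E col" and lw: "is_leaf E l w"
  shows "vertex_color_avoiding_connected (V - {l}) (E - {{l, w}}) col"
  unfolding vertex_color_avoiding_connected_def vc_avoiding_connected_def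
proof (intro allI ballI conjI)
  fix c u v assume u: "u \<in> V - {l}" and v: "v \<in> V - {l}"
  have uv: "conn_in E V u v" "col u = c \<or> col v = c \<or> conn_in E {x\<in>V. col x \<noteq> c} u v"
    using vca u v unfolding vertex_color_avoiding_connected_def vc_avoiding_connected_def by blast+
  show "conn_in (E - {{l, w}}) (V - {l}) u v"
    using conn_in_remove_leaf[OF lw uv(1)] u v by blast
  have "{x\<in>V. col x \<noteq> c} - {l} = {x \<in> V - {l}. col x \<noteq> c}" by blast
  then show "col u = c \<or> col v = c \<or> conn_in (E - {{l, w}}) {x \<in> V - {l}. col x \<noteq> c} u v"
    using conn_in_remove_leaf[OF lw, of "{x\<in>V. col x \<noteq> c}" u v] uv(2) u v by auto
qed

lemma vertex_color_avoiding_connected_leaf_color: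
  assumes vca: "vertex_color_avoiding_connected V E col" and lw: "is_leaf E l w"
    and "l \<in> V" "y \<in> V" "y \<noteq> l"
  shows "col l = col w \<or> col y = col w"
proof (rule ccontr)
  assume "\<not> ?thesis"
  with assms have "conn_in E {x\<in>V. col x \<noteq> col w} l y"
    unfolding vertex_color_avoiding_connected_def vc_avoiding_connected_def by blast
  then obtain z where "col z \<noteq> col w" "{l, z} \<in> E"
    using conn_in_first_edge \<open>y \<noteq> l\<close> by fastforce
  with is_leaf_neighbour[OF lw] show False by blast
qed

lemma sparse_vertex_color_avoiding_connected_colors_le_2:
  assumes "simple_graph V E" "vertex_color_avoiding_connected V E col" "card E < card V"
  shows "card (col ` V) \<le> 2"
  using assms(1) vertex_color_avoiding_connected_imp_connected_in[OF assms(2)] assms(3,2)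
proof (induction rule: sparse_connected_induct)
  case (small V E)
  then show ?case
    using card_image_le[OF simple_graph_finite(1)[OF small(1)], of col] by linarith
next
  case (remove_leaf V E l w)
  have "{l, w} \<in> E" "l \<noteq> w" using remove_leaf.hyps(4) unfolding is_leaf_def by auto
  then have w: "w \<in> V - {l}" using simple_graph_edgeD(3)[OF remove_leaf.hyps(1)] by blast
  show ?case
  proof (cases "col l = col w")
    case True
    with w have "col ` V = col ` (V - {l})" by blast
    moreover have "card (col ` (V - {l})) \<le> 2"
      using remove_leaf.IH vertex_color_avoiding_connected_remove_leaf[OF remove_leaf.prems
          remove_leaf.hyps(4)] by blast
    ultimately show ?thesis by simp
  next
    case False
    then have "col ` V \<subseteq> {col l, col w}"
      using vertex_color_avoiding_connected_leaf_color[OF remove_leaf.prems remove_leaf.hyps(4,3)]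
      by blast
    moreover have "card {col l, col w} \<le> 2" by (simp add: card_insert_if)
    ultimately show ?thesis by (meson card_mono finite.emptyI finite.insertI le_trans)
  qed
qed

section \<open>Extremal graphs\<close>

definition path_edges :: "nat \<Rightarrow> nat set set" where
  "path_edges n = (\<lambda>i. {i, Suc i}) ` {..<n - 1}"

definition cycle_edges :: "nat \<Rightarrow> nat set set" where
  "cycle_edges n = insert {0, n - 1} (path_edges n)"

lemma card_path_edges: "card (path_edges n) = n - 1"
proof -
  have "inj_on (\<lambda>i. {i, Suc i}) {..<n - 1}"
    by (auto simp: inj_on_def doubleton_eq_iff)
  then show ?thesis unfolding path_edges_def by (simp add: card_image)
qed

lemma card_cycle_edges:
  assumes "3 \<le> n"
  shows "card (cycle_edges n) = n"
proof -
  have "{0, n - 1} \<notin> path_edges n"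
    using assms unfolding path_edges_def by (auto simp: doubleton_eq_iff)
  moreover have "finite (path_edges n)" unfolding path_edges_def by simp
  ultimately show ?thesis
    using assms card_path_edges unfolding cycle_edges_def by simp
qed

lemma simple_graph_path_edges: "simple_graph {..<n} (path_edges n)"
  unfolding simple_graph_def path_edges_def by force

lemma simple_graph_cycle_edges:
  assumes "2 \<le> n"
  shows "simple_graph {..<n} (cycle_edges n)"
proof -
  have "0 \<noteq> n - 1" "0 \<in> {..<n}" "n - 1 \<in> {..<n}" using assms by auto
  then show ?thesis
    using simple_graph_path_edges[of n] unfolding simple_graph_def cycle_edges_def by blast
qed

lemma connected_in_path_edges_interval:
  assumes "b \<le> n"
  shows "connected_in (path_edges n) {a..<b}"
proof -
  have ordered: "conn_in (path_edges n) {a..<b} i j" if "a \<le> i" "i \<le> j" "j < b" for i j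
    using that(2,3)
  proof (induction j rule: dec_induct)
    case base
    then show ?case using that(1) by (intro conn_in_refl) simp
  next
    case (step m)
    have "{m, Suc m} \<in> path_edges n"
      using step.prems assms unfolding path_edges_def by force
    then have "conn_in (path_edges n) {a..<b} m (Suc m)"
      using step that(1) by (intro conn_in_edge) auto
    moreover have "conn_in (path_edges n) {a..<b} i m"
      using step.IH step.prems by simp
    ultimately show ?case by (blast intro: conn_in_trans)
  qed
  show ?thesis
    unfolding connected_in_def
  proof (intro ballI)
    fix i j assume "i \<in> {a..<b}" "j \<in> {a..<b}"
    then show "conn_in (path_edges n) {a..<b} i j"
      using ordered[of i j] ordered[of j i] conn_in_sym by (cases "i \<le> j") auto
  qed
qed

lemma connected_in_cycle_edges_remove_vertex:
  assumes "c < n - 1"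
  shows "connected_in (cycle_edges n) ({..<n} - {c})"
proof -
  have path: "connected_in (cycle_edges n) {a..<b}" if "b \<le> n" for a b
    using connected_in_path_edges_interval[OF that] connected_in_mono_edges
    unfolding cycle_edges_def by blast
  show ?thesis
  proof (cases "c = 0")
    case True
    then have "{..<n} - {c} = {1..<n}" by auto
    then show ?thesis using path by simp
  next
    case False
    have "{..<n} - {c} = {0..<c} \<union> {Suc c..<n}" using assms by auto
    moreover have "connected_in (cycle_edges n) {0..<c}" "connected_in (cycle_edges n) {Suc c..<n}"
      using path assms by simp_all
    moreover have "0 \<in> {0..<c}" "n - 1 \<in> {Suc c..<n}" "{0, n - 1} \<in> cycle_edges n"
      using assms False unfolding cycle_edges_def by auto
    ultimately show ?thesis using connected_in_Un_edge by metis
  qed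
qed

lemma image_min_lessThan:
  fixes k n :: nat
  assumes "1 \<le> k" "k \<le> n"
  shows "(\<lambda>x. min x (k - 1)) ` {..<n} = {..<k}"
proof
  have "min x (k - 1) < k" for x
    using assms(1) min.cobounded2[of x "k - 1"] by linarith
  then show "(\<lambda>x. min x (k - 1)) ` {..<n} \<subseteq> {..<k}" by auto
  show "{..<k} \<subseteq> (\<lambda>x. min x (k - 1)) ` {..<n}"
  proof
    fix j assume "j \<in> {..<k}"
    with assms have "j = min j (k - 1)" "j \<in> {..<n}" by auto
    then show "j \<in> (\<lambda>x. min x (k - 1)) ` {..<n}" by (rule image_eqI)
  qed
qed

lemma vertex_color_avoiding_connectedI:
  assumes "connected_in E V" "\<And>c. connected_in E {x \<in> V. col x \<noteq> c}"
  shows "vertex_color_avoiding_connected V E col"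
  using assms
  unfolding vertex_color_avoiding_connected_def vc_avoiding_connected_def connected_in_def
  by blast

lemma vertex_color_avoiding_connected_min_coloring:
  assumes "k \<le> n" and path: "path_edges n \<subseteq> E"
    and remove: "\<And>c. c < k - 1 \<Longrightarrow> connected_in E ({..<n} - {c})"
  shows "vertex_color_avoiding_connected {..<n} E (\<lambda>x. min x (k - 1))"
proof (rule vertex_color_avoiding_connectedI)
  have initial: "connected_in E {..<b}" if "b \<le> n" for b
    using connected_in_mono_edges[OF connected_in_path_edges_interval[OF that, of 0] path]
    by (simp add: atLeast0LessThan)
  then show "connected_in E {..<n}" by simp
  fix c
  consider "c < k - 1" | "c = k - 1" | "k - 1 < c" by linarith
  then show "connected_in E {x \<in> {..<n}. min x (k - 1) \<noteq> c}"
  proof cases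
    case 1
    then have "{x \<in> {..<n}. min x (k - 1) \<noteq> c} = {..<n} - {c}" by auto
    with 1 remove show ?thesis by simp
  next
    case 2
    with assms(1) have "{x \<in> {..<n}. min x (k - 1) \<noteq> c} = {..<k - 1}" by auto
    with assms(1) initial show ?thesis by simp
  next
    case 3
    then have "{x \<in> {..<n}. min x (k - 1) \<noteq> c} = {..<n}" by auto
    with initial show ?thesis by simp
  qed
qed

lemma path_vertex_color_avoiding_connected:
  assumes "k \<le> 2" "k \<le> n"
  shows "vertex_color_avoiding_connected {..<n} (path_edges n) (\<lambda>x. min x (k - 1))"
proof (rule vertex_color_avoiding_connected_min_coloring[OF assms(2) order_refl])
  fix c assume "c < k - 1"
  with assms have "{..<n} - {c} = {1..<n}" by auto
  then show "connected_in (path_edges n) ({..<n} - {c})"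
    using connected_in_path_edges_interval by simp
qed

lemma cycle_vertex_color_avoiding_connected:
  assumes "k \<le> n"
  shows "vertex_color_avoiding_connected {..<n} (cycle_edges n) (\<lambda>x. min x (k - 1))"
  using assms connected_in_cycle_edges_remove_vertex
  by (intro vertex_color_avoiding_connected_min_coloring) (auto simp: cycle_edges_def)

theorem theorem3p11:
  shows "(\<forall>(V :: 'a set) (E :: 'a set set) (col :: 'a \<Rightarrow> 'c) (n :: nat) (k :: nat).
            simple_graph V E \<and> card V = n \<and> card (col ` V) = k \<and> 0 < k \<and>
            vertex_color_avoiding_connected V E col \<longrightarrow>
            (k \<le> 2 \<longrightarrow> n - 1 \<le> card E) \<and> (3 \<le> k \<longrightarrow> n \<le> card E))
       \<and> (\<forall>(n :: nat) (k :: nat). 1 \<le> k \<and> k \<le> n \<longrightarrow>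
            (\<exists>(V :: nat set) (E :: nat set set) (col :: nat \<Rightarrow> nat).
               simple_graph V E \<and> card V = n \<and> card (col ` V) = k \<and>
               vertex_color_avoiding_connected V E col \<and>
               card E = (if k \<le> 2 then n - 1 else n)))"
proof (intro conjI allI impI)
  fix V :: "'a set" and E col n k
  assume "simple_graph V E \<and> card V = n \<and> card (col ` V) = k \<and> 0 < k \<and>
    vertex_color_avoiding_connected V E col"
  then have sg: "simple_graph V E" and n: "card V = n" and k: "card (col ` V) = k"
    and vca: "vertex_color_avoiding_connected V E col" by auto
  have "connected_in E V" by (rule vertex_color_avoiding_connected_imp_connected_in[OF vca])
  then show "n - 1 \<le> card E" using connected_card_le_Suc_card_edges[OF sg] n by simp
  show "n \<le> card E" if "3 \<le> k"
    using sparse_vertex_color_avoiding_connected_colors_le_2[OF sg vca] n k that by fastforce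
next
  fix n k :: nat
  assume k: "1 \<le> k \<and> k \<le> n"
  let ?col = "\<lambda>x. min x (k - 1)"
  have colors: "card (?col ` {..<n}) = k" using image_min_lessThan[of k n] k by simp
  show "\<exists>V E (col :: nat \<Rightarrow> nat). simple_graph V E \<and> card V = n \<and> card (col ` V) = k \<and>
      vertex_color_avoiding_connected V E col \<and> card E = (if k \<le> 2 then n - 1 else n)"
  proof (cases "k \<le> 2")
    case True
    then show ?thesis
      using k colors simple_graph_path_edges card_path_edges path_vertex_color_avoiding_connected
      by (intro exI[of _ "{..<n}"] exI[of _ "path_edges n"] exI[of _ ?col]) simp
  next
    case False
    then show ?thesis
      using k colors simple_graph_cycle_edges card_cycle_edges cycle_vertex_color_avoiding_connected
      by (intro exI[of _ "{..<n}"] exI[of _ "cycle_edges n"] exI[of _ ?col]) simp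
  qed
qed

end
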